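(* Let $(K_n,\Sigma)$ be a signed complete graph with $n\geq4$, and let $X(\Sigma)$ be the set of edges $vw$ of $K_n$ such that the triangle $uvw$ is even for every $u\in V(K_n)\setminus\{v,w\}$. Then there exists a signed complete graph $(K_k,\Sigma')$ with vertex set $\{v_1,\dots,v_k\}$ and complete graphs $H_1,\dots,H_k$ with $V(H_1),\dots,V(H_k)$ a partition of $V(K_n)$, such that $(K_n,\Sigma)$ is switching equivalent to the signed graph obtained from $(K_k,\Sigma')$ by substituting $v_i$ with $(H_i,\emptyset)$ for each $i\in[k]$, and $X(\Sigma)=\bigcup_{i=1}^kE(H_i)$.
   Context: A signed graph is a pair $(G,\Sigma)$ with $G$ a finite simple graph and $\Sigma\subseteq E(G)$ (odd edges; the others are even). A triangle $uvw$ is odd (resp. even) if $|\Sigma\cap\{uv,uw,vw\}|$ is odd (resp. even). Switching at a vertex $v$ replaces $\Sigma$ by $\Sigma\triangle\delta(v)$, where $\delta(v)$ is the set of edges incident with $v$; two signed graphs are switching equivalent if one is obtained from the other by a sequence of switchings. Substituting every vertex $v_i$ of $(K_k,\Sigma')$ with $(H_i,\emptyset)$ yields the signed complete graph on $\bigcup_iV(H_i)$ in which edges inside each $V(H_i)$ are even and every edge between $V(H_i)$ and $V(H_j)$ ($i\neq j$) is odd iff $v_iv_j\in\Sigma'$. *)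

theory Defs
  imports Main
begin

definition cedges :: "'a set \<Rightarrow> 'a set set" where
  "cedges V = {e. e \<subseteq> V \<and> card e = 2}"

text \<open>A signed complete graph on V: a set of odd edges Sigma, a subset of cedges V.\<close>
definition signed_complete :: "'a set \<Rightarrow> 'a set set \<Rightarrow> bool" where
  "signed_complete V S \<longleftrightarrow> S \<subseteq> cedges V"

definition delta :: "'a set \<Rightarrow> 'a \<Rightarrow> 'a set set" where
  "delta V v = {e \<in> cedges V. v \<in> e}"

definition switch :: "'a set \<Rightarrow> 'a \<Rightarrow> 'a set set \<Rightarrow> 'a set set" where
  "switch V v S = S \<union> delta V v - (S \<inter> delta V v)"

definition switch_step :: "'a set \<Rightarrow> 'a set set \<Rightarrow> 'a set set \<Rightarrow> bool" where
  "switch_step V S T \<longleftrightarrow> (\<exists>v\<in>V. T = switch V v S)"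

definition switching_equiv :: "'a set \<Rightarrow> 'a set set \<Rightarrow> 'a set set \<Rightarrow> bool" where
  "switching_equiv V S T \<longleftrightarrow> (switch_step V)\<^sup>*\<^sup>* S T"

definition even_triangle :: "'a set set \<Rightarrow> 'a \<Rightarrow> 'a \<Rightarrow> 'a \<Rightarrow> bool" where
  "even_triangle S u v w \<longleftrightarrow> even (card (S \<inter> {{u,v},{u,w},{v,w}}))"

definition Xset :: "'a set \<Rightarrow> 'a set set \<Rightarrow> 'a set set" where
  "Xset V S = {{v,w} | v w. v \<in> V \<and> w \<in> V \<and> v \<noteq> w \<and>
      (\<forall>u \<in> V - {v,w}. even_triangle S u v w)}"

text \<open>Substituting vertex i of (K_k, S') (vertex set {0..<k}) by (H_i, empty) where
  V(H_i) = P i: the resulting set of odd edges.\<close>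
definition substitute :: "nat \<Rightarrow> (nat \<Rightarrow> 'a set) \<Rightarrow> nat set set \<Rightarrow> 'a set set" where
  "substitute k P S' = {{x,y} | x y i j. i < k \<and> j < k \<and> i \<noteq> j \<and>
      x \<in> P i \<and> y \<in> P j \<and> {i,j} \<in> S'}"

end

theory Submission
  imports Defs
begin

(* Call x and y twins if, for every vertex u, the edge xy is odd exactly when exactly one of
   ux, uy is odd; for x ~= y this says that every triangle through xy is even, so X(Sigma)
   consists of the edges joining distinct twins. Being twins is an equivalence relation, since
   for twins x, y and y, z the sign of xz is the sum of the signs of xy and yz. Choose a
   representative r(x) in the twin class of every vertex x and switch at all x for which the
   edge x r(x) is odd: afterwards every edge xy has the original sign of r(x) r(y). Hence edges
   inside a class become even and the switched graph is obtained from the signed graph on the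
   classes by substitution. *)

definition odd_edge :: "'a set set \<Rightarrow> 'a \<Rightarrow> 'a \<Rightarrow> bool" where
  "odd_edge S x y \<longleftrightarrow> {x,y} \<in> S"

lemma odd_edge_commute: "odd_edge S x y = odd_edge S y x"
  unfolding odd_edge_def by (simp add: insert_commute)

lemma not_odd_edge_loop: "S \<subseteq> cedges V \<Longrightarrow> \<not> odd_edge S x x"
  unfolding odd_edge_def cedges_def by auto

lemma cedges_iff: "e \<in> cedges V \<longleftrightarrow> (\<exists>x y. e = {x,y} \<and> x \<in> V \<and> y \<in> V \<and> x \<noteq> y)"
  unfolding cedges_def by (auto simp: card_2_iff)

lemma cedges_eqI:
  assumes "A \<subseteq> cedges V" "B \<subseteq> cedges V"
    and "\<And>x y. x \<in> V \<Longrightarrow> y \<in> V \<Longrightarrow> x \<noteq> y \<Longrightarrow> {x,y} \<in> A \<longleftrightarrow> {x,y} \<in> B"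
  shows "A = B"
proof (rule set_eqI)
  fix e
  show "e \<in> A \<longleftrightarrow> e \<in> B"
    using assms unfolding subset_iff cedges_iff by blast
qed

lemma even_triangle_iff:
  assumes "u \<noteq> v" "u \<noteq> w" "v \<noteq> w"
  shows "even_triangle S u v w \<longleftrightarrow> (odd_edge S v w \<longleftrightarrow> odd_edge S u v \<noteq> odd_edge S u w)"
proof -
  have "{u,v} \<noteq> {u,w}" "{u,v} \<noteq> {v,w}" "{u,w} \<noteq> {v,w}"
    using assms by (auto simp: doubleton_eq_iff)
  then show ?thesis
    unfolding even_triangle_def odd_edge_def
    by (cases "{u,v} \<in> S"; cases "{u,w} \<in> S"; cases "{v,w} \<in> S") (simp_all add: Int_insert_left)
qed

lemma even_triangle_commute: "even_triangle S u v w \<longleftrightarrow> even_triangle S u w v"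
  unfolding even_triangle_def by (simp add: insert_commute)

definition edge_cut :: "'a set \<Rightarrow> 'a set \<Rightarrow> 'a set set" where
  "edge_cut V A = {e \<in> cedges V. \<exists>x y. e = {x,y} \<and> x \<in> A \<and> y \<notin> A}"

definition switch_set :: "'a set \<Rightarrow> 'a set \<Rightarrow> 'a set set \<Rightarrow> 'a set set" where
  "switch_set V A S = sym_diff S (edge_cut V A)"

lemma edge_cut_insert:
  "v \<notin> A \<Longrightarrow> edge_cut V (insert v A) = sym_diff (edge_cut V A) (delta V v)"
  unfolding edge_cut_def delta_def cedges_iff by (auto simp: doubleton_eq_iff)

lemma switch_set_insert:
  "v \<notin> A \<Longrightarrow> switch_set V (insert v A) S = switch V v (switch_set V A S)"
  unfolding switch_set_def switch_def edge_cut_insert by blast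

lemma switching_equiv_switch_set:
  assumes "finite A" "A \<subseteq> V"
  shows "switching_equiv V S (switch_set V A S)"
  using assms
proof (induction A rule: finite_induct)
  case empty
  then show ?case
    unfolding switching_equiv_def switch_set_def edge_cut_def by simp
next
  case (insert v A)
  then have "switch_step V (switch_set V A S) (switch_set V (insert v A) S)"
    unfolding switch_step_def by (auto simp: switch_set_insert)
  with insert show ?case
    unfolding switching_equiv_def by (meson insert_subset rtranclp.rtrancl_into_rtrancl)
qed

lemma switch_set_subset_cedges: "S \<subseteq> cedges V \<Longrightarrow> switch_set V A S \<subseteq> cedges V"
  unfolding switch_set_def edge_cut_def by blast

lemma odd_edge_switch_set:
  assumes "x \<in> V" "y \<in> V" "x \<noteq> y"
  shows "odd_edge (switch_set V A S) x y \<longleftrightarrow> (odd_edge S x y \<longleftrightarrow> (x \<in> A \<longleftrightarrow> y \<in> A))"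
  using assms unfolding odd_edge_def switch_set_def edge_cut_def cedges_iff
  by (auto simp: doubleton_eq_iff)

definition twins :: "'a set \<Rightarrow> 'a set set \<Rightarrow> 'a \<Rightarrow> 'a \<Rightarrow> bool" where
  "twins V S x y \<longleftrightarrow> x \<in> V \<and> y \<in> V \<and>
     (\<forall>u\<in>V. odd_edge S x y \<longleftrightarrow> odd_edge S u x \<noteq> odd_edge S u y)"

lemma twins_commute: "twins V S x y \<Longrightarrow> twins V S y x"
  unfolding twins_def by (metis odd_edge_commute)

lemma twins_refl: "S \<subseteq> cedges V \<Longrightarrow> x \<in> V \<Longrightarrow> twins V S x x"
  unfolding twins_def by (metis not_odd_edge_loop)

lemma twins_trans:
  assumes xy: "twins V S x y" and yz: "twins V S y z"
  shows "twins V S x z"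
proof -
  have "z \<in> V" "odd_edge S x y \<longleftrightarrow> odd_edge S z x \<noteq> odd_edge S z y"
    using xy yz unfolding twins_def by auto
  then have "odd_edge S x z \<longleftrightarrow> odd_edge S x y \<noteq> odd_edge S y z"
    by (metis odd_edge_commute)
  with xy yz show ?thesis
    unfolding twins_def by blast
qed

lemma Xset_iff_twins:
  assumes "S \<subseteq> cedges V" "x \<in> V" "y \<in> V" "x \<noteq> y"
  shows "{x,y} \<in> Xset V S \<longleftrightarrow> twins V S x y"
proof -
  have "{x,y} \<in> Xset V S \<longleftrightarrow> (\<forall>u\<in>V - {x,y}. even_triangle S u x y)"
  proof
    assume "{x,y} \<in> Xset V S"
    then obtain v w where "{x,y} = {v,w}" "\<forall>u\<in>V - {v,w}. even_triangle S u v w"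
      unfolding Xset_def by blast
    then show "\<forall>u\<in>V - {x,y}. even_triangle S u x y"
      by (auto simp: doubleton_eq_iff even_triangle_commute)
  qed (use assms(2-4) in \<open>auto simp: Xset_def\<close>)
  also have "\<dots> \<longleftrightarrow> (\<forall>u\<in>V. odd_edge S x y \<longleftrightarrow> odd_edge S u x \<noteq> odd_edge S u y)"
  proof -
    have "odd_edge S x y \<longleftrightarrow> odd_edge S u x \<noteq> odd_edge S u y" if "u = x \<or> u = y" for u
      using that by (auto simp: not_odd_edge_loop[OF assms(1)] odd_edge_commute[of S y x])
    then show ?thesis
      using even_triangle_iff[of _ x y S] assms(4) by auto
  qed
  also have "\<dots> \<longleftrightarrow> twins V S x y"
    using assms(2,3) unfolding twins_def by simp
  finally show ?thesis .
qed

definition twin_rel :: "'a set \<Rightarrow> 'a set set \<Rightarrow> 'a rel" where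
  "twin_rel V S = {(x,y). twins V S x y}"

lemma equiv_twin_rel: "S \<subseteq> cedges V \<Longrightarrow> equiv V (twin_rel V S)"
proof (rule equivI)
  show "twin_rel V S \<subseteq> V \<times> V"
    unfolding twin_rel_def twins_def by auto
qed (auto simp: refl_on_def sym_def trans_def twin_rel_def
      intro: twins_refl twins_commute twins_trans)

lemma Xset_eq_Union_twin_classes:
  assumes "S \<subseteq> cedges V"
  shows "Xset V S = (\<Union>C\<in>V // twin_rel V S. cedges C)"
proof -
  have T: "equiv V (twin_rel V S)"
    using equiv_twin_rel[OF assms] .
  show ?thesis
  proof (rule cedges_eqI)
    show "Xset V S \<subseteq> cedges V"
      unfolding Xset_def subset_iff cedges_iff by blast
    show "(\<Union>C\<in>V // twin_rel V S. cedges C) \<subseteq> cedges V"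
      using in_quotient_imp_subset[OF T] by (auto simp: cedges_def)
  next
    fix x y assume xy: "x \<in> V" "y \<in> V" "x \<noteq> y"
    have "{x,y} \<in> (\<Union>C\<in>V // twin_rel V S. cedges C) \<longleftrightarrow>
        (\<exists>C\<in>V // twin_rel V S. {x,y} \<subseteq> C)"
      using xy(3) by (auto simp: cedges_def)
    also have "\<dots> \<longleftrightarrow> (x, y) \<in> twin_rel V S"
    proof
      assume "(x, y) \<in> twin_rel V S"
      then have "{x,y} \<subseteq> twin_rel V S `` {x}"
        using equiv_class_self[OF T xy(1)] by blast
      then show "\<exists>C\<in>V // twin_rel V S. {x,y} \<subseteq> C"
        using quotientI[OF xy(1)] by blast
    qed (use in_quotient_imp_in_rel[OF T] in blast)
    finally show "{x,y} \<in> Xset V S \<longleftrightarrow> {x,y} \<in> (\<Union>C\<in>V // twin_rel V S. cedges C)"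
      using Xset_iff_twins[OF assms xy] by (simp add: twin_rel_def)
  qed
qed

lemma odd_edge_switch_to_representatives:
  assumes r: "\<forall>z\<in>V. twins V S (r z) z" and xy: "x \<in> V" "y \<in> V" "x \<noteq> y"
  shows "odd_edge (switch_set V {z\<in>V. odd_edge S (r z) z} S) x y \<longleftrightarrow> odd_edge S (r x) (r y)"
proof -
  have "r x \<in> V" "odd_edge S (r x) x \<longleftrightarrow> odd_edge S y (r x) \<noteq> odd_edge S y x"
    using r xy unfolding twins_def by auto
  then have rx: "r x \<in> V" "odd_edge S (r x) x \<longleftrightarrow> odd_edge S (r x) y \<noteq> odd_edge S x y"
    by (simp_all add: odd_edge_commute[of S y])
  have ry: "odd_edge S (r y) y \<longleftrightarrow> odd_edge S (r x) (r y) \<noteq> odd_edge S (r x) y"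
    using r xy rx(1) unfolding twins_def by auto
  show ?thesis
    using odd_edge_switch_set[OF xy] rx(2) ry xy(1,2) by auto
qed

lemma substitute_mem:
  assumes disj: "\<forall>i<k. \<forall>j<k. i \<noteq> j \<longrightarrow> P i \<inter> P j = {}"
    and ij: "i < k" "j < k" "x \<in> P i" "y \<in> P j"
  shows "{x,y} \<in> substitute k P S' \<longleftrightarrow> i \<noteq> j \<and> {i,j} \<in> S'"
proof
  have block_unique: "i = i'" if "i < k" "i' < k" "z \<in> P i" "z \<in> P i'" for i i' z
    using disj that by blast
  assume "{x,y} \<in> substitute k P S'"
  then obtain x' y' i' j' where sub: "{x,y} = {x',y'}" "i' < k" "j' < k" "i' \<noteq> j'"
      "x' \<in> P i'" "y' \<in> P j'" "{i',j'} \<in> S'"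
    unfolding substitute_def by blast
  then have "(i = i' \<and> j = j') \<or> (i = j' \<and> j = i')"
    using ij block_unique unfolding doubleton_eq_iff by metis
  with sub show "i \<noteq> j \<and> {i,j} \<in> S'"
    by (auto simp: insert_commute)
qed (use ij in \<open>auto simp: substitute_def\<close>)

lemma substitute_eqI:
  assumes disj: "\<forall>i<k. \<forall>j<k. i \<noteq> j \<longrightarrow> P i \<inter> P j = {}"
    and cover: "(\<Union>i<k. P i) = V"
    and "R \<subseteq> cedges V"
    and R: "\<And>i j x y. i < k \<Longrightarrow> j < k \<Longrightarrow> x \<in> P i \<Longrightarrow> y \<in> P j \<Longrightarrow> x \<noteq> y \<Longrightarrow>
      {x,y} \<in> R \<longleftrightarrow> i \<noteq> j \<and> {i,j} \<in> S'"
  shows "R = substitute k P S'"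
proof (rule cedges_eqI)
  show "substitute k P S' \<subseteq> cedges V"
    using disj cover unfolding substitute_def subset_iff cedges_iff by blast
next
  fix x y assume "x \<in> V" "y \<in> V" "x \<noteq> y"
  then obtain i j where "i < k" "j < k" "x \<in> P i" "y \<in> P j"
    using cover by blast
  with R[OF this \<open>x \<noteq> y\<close>] show "{x,y} \<in> R \<longleftrightarrow> {x,y} \<in> substitute k P S'"
    using substitute_mem[OF disj] by blast
qed (fact \<open>R \<subseteq> cedges V\<close>)

lemma bij_betw_quotient_partition:
  fixes k :: nat
  assumes T: "equiv V T" and P: "bij_betw P {0..<k} (V // T)"
  shows "\<forall>i<k. P i \<noteq> {}"
    and "\<forall>i<k. \<forall>j<k. i \<noteq> j \<longrightarrow> P i \<inter> P j = {}"
    and "(\<Union>i<k. P i) = V"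
proof -
  have P_in_quotient: "P i \<in> V // T" if "i < k" for i
    using bij_betw_apply[OF P, of i] that by simp
  show "\<forall>i<k. P i \<noteq> {}"
    using P_in_quotient in_quotient_imp_non_empty[OF T] by blast
  show "\<forall>i<k. \<forall>j<k. i \<noteq> j \<longrightarrow> P i \<inter> P j = {}"
    using P_in_quotient quotient_disj[OF T] bij_betw_imp_inj_on[OF P] unfolding inj_on_def by fastforce
  show "(\<Union>i<k. P i) = V"
    using Union_quotient[OF T] bij_betw_imp_surj_on[OF P] by (simp add: atLeast0LessThan)
qed

lemma switching_equiv_substitute_twin_classes:
  assumes "finite V" and S: "S \<subseteq> cedges V"
    and P: "bij_betw P {0..<k} (V // twin_rel V S)"
  shows "\<exists>S'. signed_complete {0..<k} S' \<and> switching_equiv V S (substitute k P S')"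
proof -
  let ?T = "twin_rel V S"
  have T: "equiv V ?T"
    using equiv_twin_rel[OF S] .
  note partition = bij_betw_quotient_partition[OF T P]
  define rep :: "'a set \<Rightarrow> 'a" where "rep C = (SOME z. z \<in> C)" for C
  define r where "r x = rep (?T `` {x})" for x
  define S' where "S' = {{i,j} | i j. i < k \<and> j < k \<and> i \<noteq> j \<and> odd_edge S (rep (P i)) (rep (P j))}"
  have r_twins: "\<forall>z\<in>V. twins V S (r z) z"
  proof
    fix z assume "z \<in> V"
    then have "r z \<in> ?T `` {z}"
      unfolding r_def rep_def using equiv_class_self[OF T] by (metis someI)
    then show "twins V S (r z) z"
      by (simp add: twin_rel_def twins_commute)
  qed
  have r_block: "r x = rep (P i)" if "i < k" "x \<in> P i" for i x
  proof -
    have "P i \<in> V // ?T"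
      using bij_betw_apply[OF P, of i] that(1) by simp
    then have "?T `` {x} = P i"
      using that(2) T by (metis quotientE equiv_class_eq Image_singleton_iff)
    then show ?thesis
      by (simp add: r_def)
  qed
  have S'_mem: "{i,j} \<in> S' \<longleftrightarrow> i < k \<and> j < k \<and> i \<noteq> j \<and> odd_edge S (rep (P i)) (rep (P j))" for i j
    unfolding S'_def by (auto simp: doubleton_eq_iff odd_edge_commute)
  define A where "A = {z \<in> V. odd_edge S (r z) z}"
  have "switch_set V A S = substitute k P S'"
  proof (rule substitute_eqI[OF partition(2,3) switch_set_subset_cedges[OF S]])
    fix i j x y assume ij: "i < k" "j < k" "x \<in> P i" "y \<in> P j" "x \<noteq> y"
    then have "x \<in> V" "y \<in> V"
      using partition(3) by blast+
    then have "odd_edge (switch_set V A S) x y \<longleftrightarrow> odd_edge S (rep (P i)) (rep (P j))"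
      using odd_edge_switch_to_representatives[OF r_twins] ij r_block unfolding A_def by simp
    also have "\<dots> \<longleftrightarrow> i \<noteq> j \<and> {i,j} \<in> S'"
      using S'_mem ij not_odd_edge_loop[OF S] by blast
    finally show "{x,y} \<in> switch_set V A S \<longleftrightarrow> i \<noteq> j \<and> {i,j} \<in> S'"
      unfolding odd_edge_def .
  qed
  moreover have "switching_equiv V S (switch_set V A S)"
    by (rule switching_equiv_switch_set) (use \<open>finite V\<close> in \<open>auto simp: A_def\<close>)
  moreover have "signed_complete {0..<k} S'"
    unfolding signed_complete_def S'_def subset_iff cedges_iff by auto
  ultimately show ?thesis
    by metis
qed

theorem lemma3p7:
  fixes V :: "'a set" and S :: "'a set set"
  assumes "finite V" and "card V \<ge> 4" and "signed_complete V S"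
  shows "\<exists>(k::nat) (P :: nat \<Rightarrow> 'a set) (S' :: nat set set).
           signed_complete {0..<k} S' \<and>
           (\<forall>i<k. P i \<noteq> {}) \<and>
           (\<forall>i<k. \<forall>j<k. i \<noteq> j \<longrightarrow> P i \<inter> P j = {}) \<and>
           (\<Union>i<k. P i) = V \<and>
           switching_equiv V S (substitute k P S') \<and>
           Xset V S = (\<Union>i<k. cedges (P i))"
proof -
  have S: "S \<subseteq> cedges V"
    using assms(3) unfolding signed_complete_def .
  have T: "equiv V (twin_rel V S)"
    using equiv_twin_rel[OF S] .
  define k where "k = card (V // twin_rel V S)"
  obtain P where P: "bij_betw P {0..<k} (V // twin_rel V S)"
    using ex_bij_betw_nat_finite finite_quotient[OF assms(1) equiv_type[OF T]]
    unfolding k_def by blast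
  obtain S' where "signed_complete {0..<k} S'" "switching_equiv V S (substitute k P S')"
    using switching_equiv_substitute_twin_classes[OF assms(1) S P] by blast
  moreover have "Xset V S = (\<Union>i<k. cedges (P i))"
    using Xset_eq_Union_twin_classes[OF S] bij_betw_imp_surj_on[OF P, symmetric]
    by (simp add: atLeast0LessThan image_image)
  ultimately show ?thesis
    using bij_betw_quotient_partition[OF T P] by blast
qed

end
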